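(* Assume $n_i(1)+n_i(0)>0$ for every link $i$. A point $\xi\in\Xi$ satisfies $\partial L(\xi)/\partial\xi=0$ if and only if, for every link $i\in E$, $$\xi_i=(1-r_i)+r_i\cdot\mathbf 1(i\notin\mathscr S)\cdot\prod_{j\in B_i}\xi_j .$$ In particular $\xi_i=1-r_i$ for $i\in\mathscr S$, and for a non-root link $i$, $\pi_i:=\prod_{j\in B_i}\xi_j$ satisfies $\pi_i=\prod_{j\in B_i}\big[(1-r_j)+r_j\pi_i\big]$.
   Context: Network: a finite set of directed links $E=\{1,\dots,m\}$ between nodes, forming a directed acyclic graph. For a link $i$, $C_i$ is the set of links whose tail is the head of $i$ (child links); $B_i$ is the set of links having the same tail as $i$ (brother links, including $i$ itself); $F_i$ is the set of links whose head is the tail of $i$ (parent links). A link $i$ is a leaf link if $C_i=\emptyset$; $R_i$ is the set of leaf links that are descendants of $i$ (including $i$ itself if $i$ is a leaf). The network is covered by $K\ge1$ multicast trees $T_1,\dots,T_K$: $T_k$ has a root link $S_k$ whose tail is a source node with no incoming link ($F_{S_k}=\emptyset$); its link set $E_k$ consists of $S_k$ and all descendants of $S_k$; every link $i\in E_k\setminus\{S_k\}$ has exactly one parent link in $E_k$, denoted $f^{(k)}_i\in F_i\cap E_k$; every link belongs to some $E_k$; each root link $S_k$ belongs only to $E_k$. $\mathscr S=\{S_1,\dots,S_K\}$. Loss model: each link $i$ has loss rate $\theta_i\in(0,1)$. From the source of tree $T_k$, $n_k$ probes are sent; $X^{(k,t)}_i=1$ if probe $t$ of tree $k$ reached the head of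 link $i\in E_k$; a probe at the tail of link $i$ traverses it with probability $1-\theta_i$, independently across links, probes and trees; only leaf links are observed. Internal views: $Y^{(k,t)}_i=\max_{r\in R_i}X^{(k,t)}_r$ for $i\in E_k$; $n_{k,i}(1)=\sum_{t=1}^{n_k}Y^{(k,t)}_i$ for $i\in E_k$ and $0$ otherwise; $n_{k,S_k}(0)=n_k-n_{k,S_k}(1)$, $n_{k,i}(0)=n_{k,f^{(k)}_i}(1)-n_{k,i}(1)$ for $i\in E_k\setminus\{S_k\}$, and $0$ for $i\notin E_k$; $n_i(1)=\sum_k n_{k,i}(1)$, $n_i(0)=\sum_k n_{k,i}(0)$; $r_i=n_i(1)/(n_i(1)+n_i(0))$. $\Xi$ is the set of $\xi\in(0,1)^m$ with $\xi_i>\prod_{j\in C_i}\xi_j$ for every non-leaf link $i$, and the log-likelihood of the observed data in terms of $\xi\in\Xi$ is $L(\xi)=\sum_{i\in E}\big[n_i(1)\log\frac{1-\xi_i}{1-\prod_{j\in C_i}\xi_j}+n_i(0)\log\xi_i\big]$, with the empty product over $C_i=\emptyset$ equal to $0$. *)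

theory Defs
  imports Complex_Main
begin

definition children :: "'a set \<Rightarrow> ('a \<Rightarrow> 'v) \<Rightarrow> ('a \<Rightarrow> 'v) \<Rightarrow> 'a \<Rightarrow> 'a set" where
  "children E tail head i = {j \<in> E. tail j = head i}"

definition brothers :: "'a set \<Rightarrow> ('a \<Rightarrow> 'v) \<Rightarrow> 'a \<Rightarrow> 'a set" where
  "brothers E tail i = {j \<in> E. tail j = tail i}"

definition parents :: "'a set \<Rightarrow> ('a \<Rightarrow> 'v) \<Rightarrow> ('a \<Rightarrow> 'v) \<Rightarrow> 'a \<Rightarrow> 'a set" where
  "parents E tail head i = {j \<in> E. head j = tail i}"

definition child_rel :: "'a set \<Rightarrow> ('a \<Rightarrow> 'v) \<Rightarrow> ('a \<Rightarrow> 'v) \<Rightarrow> ('a \<times> 'a) set" where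
  "child_rel E tail head = {(i, j). i \<in> E \<and> j \<in> children E tail head i}"

definition leaf_desc :: "'a set \<Rightarrow> ('a \<Rightarrow> 'v) \<Rightarrow> ('a \<Rightarrow> 'v) \<Rightarrow> 'a \<Rightarrow> 'a set" where
  "leaf_desc E tail head i =
     {r \<in> E. (i, r) \<in> (child_rel E tail head)\<^sup>* \<and> children E tail head r = {}}"

definition tree_links :: "'a set \<Rightarrow> ('a \<Rightarrow> 'v) \<Rightarrow> ('a \<Rightarrow> 'v) \<Rightarrow> (nat \<Rightarrow> 'a) \<Rightarrow> nat \<Rightarrow> 'a set" where
  "tree_links E tail head S k = {j. (S k, j) \<in> (child_rel E tail head)\<^sup>*}"

definition tree_parent :: "'a set \<Rightarrow> ('a \<Rightarrow> 'v) \<Rightarrow> ('a \<Rightarrow> 'v) \<Rightarrow> (nat \<Rightarrow> 'a) \<Rightarrow> nat \<Rightarrow> 'a \<Rightarrow> 'a" where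
  "tree_parent E tail head S k i = (THE p. p \<in> parents E tail head i \<inter> tree_links E tail head S k)"

definition multicast_cover :: "'a set \<Rightarrow> ('a \<Rightarrow> 'v) \<Rightarrow> ('a \<Rightarrow> 'v) \<Rightarrow> nat \<Rightarrow> (nat \<Rightarrow> 'a) \<Rightarrow> bool" where
  "multicast_cover E tail head K S \<longleftrightarrow>
     finite E \<and> acyclic (child_rel E tail head) \<and> K \<ge> 1 \<and>
     (\<forall>k \<in> {1..K}. S k \<in> E \<and> parents E tail head (S k) = {}) \<and>
     (\<forall>k \<in> {1..K}. \<forall>i \<in> tree_links E tail head S k - {S k}.
        \<exists>!p. p \<in> parents E tail head i \<inter> tree_links E tail head S k) \<and>
     (\<forall>i \<in> E. \<exists>k \<in> {1..K}. i \<in> tree_links E tail head S k) \<and>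
     (\<forall>k \<in> {1..K}. \<forall>l \<in> {1..K}. S k \<in> tree_links E tail head S l \<longrightarrow> l = k)"

text \<open>X k t r: probe t of tree k reached the head of (leaf) link r. np k = n_k.\<close>

definition Yview :: "'a set \<Rightarrow> ('a \<Rightarrow> 'v) \<Rightarrow> ('a \<Rightarrow> 'v) \<Rightarrow> (nat \<Rightarrow> nat \<Rightarrow> 'a \<Rightarrow> bool)
    \<Rightarrow> nat \<Rightarrow> nat \<Rightarrow> 'a \<Rightarrow> bool" where
  "Yview E tail head X k t i = (\<exists>r \<in> leaf_desc E tail head i. X k t r)"

definition cnt1 :: "'a set \<Rightarrow> ('a \<Rightarrow> 'v) \<Rightarrow> ('a \<Rightarrow> 'v) \<Rightarrow> (nat \<Rightarrow> 'a) \<Rightarrow> (nat \<Rightarrow> nat)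
    \<Rightarrow> (nat \<Rightarrow> nat \<Rightarrow> 'a \<Rightarrow> bool) \<Rightarrow> nat \<Rightarrow> 'a \<Rightarrow> real" where
  "cnt1 E tail head S np X k i =
     (if i \<in> tree_links E tail head S k
      then real (card {t. t < np k \<and> Yview E tail head X k t i}) else 0)"

definition cnt0 :: "'a set \<Rightarrow> ('a \<Rightarrow> 'v) \<Rightarrow> ('a \<Rightarrow> 'v) \<Rightarrow> (nat \<Rightarrow> 'a) \<Rightarrow> (nat \<Rightarrow> nat)
    \<Rightarrow> (nat \<Rightarrow> nat \<Rightarrow> 'a \<Rightarrow> bool) \<Rightarrow> nat \<Rightarrow> 'a \<Rightarrow> real" where
  "cnt0 E tail head S np X k i =
     (if i \<notin> tree_links E tail head S k then 0
      else if i = S k then real (np k) - cnt1 E tail head S np X k i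
      else cnt1 E tail head S np X k (tree_parent E tail head S k i) - cnt1 E tail head S np X k i)"

definition N1 :: "'a set \<Rightarrow> ('a \<Rightarrow> 'v) \<Rightarrow> ('a \<Rightarrow> 'v) \<Rightarrow> nat \<Rightarrow> (nat \<Rightarrow> 'a) \<Rightarrow> (nat \<Rightarrow> nat)
    \<Rightarrow> (nat \<Rightarrow> nat \<Rightarrow> 'a \<Rightarrow> bool) \<Rightarrow> 'a \<Rightarrow> real" where
  "N1 E tail head K S np X i = (\<Sum>k \<in> {1..K}. cnt1 E tail head S np X k i)"

definition N0 :: "'a set \<Rightarrow> ('a \<Rightarrow> 'v) \<Rightarrow> ('a \<Rightarrow> 'v) \<Rightarrow> nat \<Rightarrow> (nat \<Rightarrow> 'a) \<Rightarrow> (nat \<Rightarrow> nat)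
    \<Rightarrow> (nat \<Rightarrow> nat \<Rightarrow> 'a \<Rightarrow> bool) \<Rightarrow> 'a \<Rightarrow> real" where
  "N0 E tail head K S np X i = (\<Sum>k \<in> {1..K}. cnt0 E tail head S np X k i)"

definition rr :: "'a set \<Rightarrow> ('a \<Rightarrow> 'v) \<Rightarrow> ('a \<Rightarrow> 'v) \<Rightarrow> nat \<Rightarrow> (nat \<Rightarrow> 'a) \<Rightarrow> (nat \<Rightarrow> nat)
    \<Rightarrow> (nat \<Rightarrow> nat \<Rightarrow> 'a \<Rightarrow> bool) \<Rightarrow> 'a \<Rightarrow> real" where
  "rr E tail head K S np X i =
     N1 E tail head K S np X i / (N1 E tail head K S np X i + N0 E tail head K S np X i)"

text \<open>Product over children, with the paper's convention that the empty product is 0.\<close>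
definition prodC :: "'a set \<Rightarrow> ('a \<Rightarrow> 'v) \<Rightarrow> ('a \<Rightarrow> 'v) \<Rightarrow> ('a \<Rightarrow> real) \<Rightarrow> 'a \<Rightarrow> real" where
  "prodC E tail head \<xi> i =
     (if children E tail head i = {} then 0 else (\<Prod>j \<in> children E tail head i. \<xi> j))"

definition Xi :: "'a set \<Rightarrow> ('a \<Rightarrow> 'v) \<Rightarrow> ('a \<Rightarrow> 'v) \<Rightarrow> ('a \<Rightarrow> real) set" where
  "Xi E tail head = {\<xi>. (\<forall>i \<in> E. 0 < \<xi> i \<and> \<xi> i < 1) \<and>
     (\<forall>i \<in> E. children E tail head i \<noteq> {} \<longrightarrow> \<xi> i > (\<Prod>j \<in> children E tail head i. \<xi> j))}"

definition loglik :: "'a set \<Rightarrow> ('a \<Rightarrow> 'v) \<Rightarrow> ('a \<Rightarrow> 'v) \<Rightarrow> nat \<Rightarrow> (nat \<Rightarrow> 'a) \<Rightarrow> (nat \<Rightarrow> nat)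
    \<Rightarrow> (nat \<Rightarrow> nat \<Rightarrow> 'a \<Rightarrow> bool) \<Rightarrow> ('a \<Rightarrow> real) \<Rightarrow> real" where
  "loglik E tail head K S np X \<xi> =
     (\<Sum>i \<in> E. N1 E tail head K S np X i * ln ((1 - \<xi> i) / (1 - prodC E tail head \<xi> i))
             + N0 E tail head K S np X i * ln (\<xi> i))"

definition grad_zero :: "'a set \<Rightarrow> (('a \<Rightarrow> real) \<Rightarrow> real) \<Rightarrow> ('a \<Rightarrow> real) \<Rightarrow> bool" where
  "grad_zero E f \<xi> \<longleftrightarrow>
     (\<forall>i \<in> E. ((\<lambda>t. f (\<xi>(i := t))) has_real_derivative 0) (at (\<xi> i)))"

end

theory Submission
  imports Defs
begin

text \<open>The coordinate \<open>\<xi> i\<close> enters \<open>L\<close> through its own summand and, through the children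
  product, through the summands of its parents, whose children are exactly the brothers of
  \<open>i\<close>. Conservation of probes makes the parents' counts \<open>n_q(1)\<close> add up to
  \<open>n_i(1) + n_i(0)\<close>, and clearing denominators turns \<open>\<partial>L/\<partial>\<xi>_i = 0\<close> into the stated
  fixed-point equation; roots have no parents, which removes the product term.\<close>

lemma multicast_cover_finite: "multicast_cover E tail head K S \<Longrightarrow> finite E"
  by (simp add: multicast_cover_def)

lemma multicast_cover_not_self_child:
  assumes "multicast_cover E tail head K S" and "i \<in> E"
  shows "i \<notin> children E tail head i"
proof
  assume "i \<in> children E tail head i"
  then have "(i, i) \<in> (child_rel E tail head)\<^sup>+" using \<open>i \<in> E\<close> by (auto simp: child_rel_def)
  then show False using assms(1) by (auto simp: multicast_cover_def acyclic_def)
qed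

lemma multicast_cover_root:
  assumes "multicast_cover E tail head K S" and "k \<in> {1..K}"
  shows "S k \<in> E" and "parents E tail head (S k) = {}"
  using assms by (auto simp: multicast_cover_def)

lemma multicast_cover_unique_tree_parent:
  assumes "multicast_cover E tail head K S" and "k \<in> {1..K}"
    and "i \<in> tree_links E tail head S k" and "i \<notin> S ` {1..K}"
  shows "\<exists>!p. p \<in> parents E tail head i \<inter> tree_links E tail head S k"
proof -
  have "i \<noteq> S k" using assms(2,4) by auto
  then show ?thesis using assms(1-3) unfolding multicast_cover_def by blast
qed

lemma multicast_cover_nonroot_has_parent:
  assumes net: "multicast_cover E tail head K S" and "i \<in> E" and "i \<notin> S ` {1..K}"
  shows "parents E tail head i \<noteq> {}"
proof -
  obtain k where "k \<in> {1..K}" and "i \<in> tree_links E tail head S k"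
    using net \<open>i \<in> E\<close> unfolding multicast_cover_def by blast
  with multicast_cover_unique_tree_parent[OF net] \<open>i \<notin> S ` {1..K}\<close> show ?thesis by blast
qed

lemma children_of_parent: "q \<in> parents E tail head i \<Longrightarrow> children E tail head q = brothers E tail i"
  by (auto simp: children_def parents_def brothers_def)

lemma child_iff_parent:
  "i \<in> E \<Longrightarrow> q \<in> E \<Longrightarrow> i \<in> children E tail head q \<longleftrightarrow> q \<in> parents E tail head i"
  by (auto simp: children_def parents_def)

lemma brother_of_nonroot:
  assumes net: "multicast_cover E tail head K S" and "i \<in> E" and "i \<notin> S ` {1..K}"
    and j: "j \<in> brothers E tail i"
  shows "j \<in> E" and "j \<notin> S ` {1..K}" and "brothers E tail j = brothers E tail i"
proof -
  show "j \<in> E" and "brothers E tail j = brothers E tail i"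
    using j by (auto simp: brothers_def)
  have "parents E tail head j = parents E tail head i"
    using j by (auto simp: brothers_def parents_def)
  then show "j \<notin> S ` {1..K}"
    using multicast_cover_root(2)[OF net] multicast_cover_nonroot_has_parent[OF net assms(2,3)]
    by auto
qed

lemma tree_links_child_closed:
  "q \<in> tree_links E tail head S k \<Longrightarrow> q \<in> E \<Longrightarrow> i \<in> children E tail head q
    \<Longrightarrow> i \<in> tree_links E tail head S k"
  unfolding tree_links_def by (auto simp: child_rel_def intro: rtrancl_into_rtrancl)

text \<open>Within one tree only the tree parent of a non-root link carries probes into it, and
  by definition of the counts those probes split into the ones seen below the link and the
  ones lost on it.\<close>

lemma sum_parents_cnt1:
  assumes net: "multicast_cover E tail head K S" and k: "k \<in> {1..K}"
    and iE: "i \<in> E" and nonroot: "i \<notin> S ` {1..K}"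
  shows "(\<Sum>q\<in>parents E tail head i. cnt1 E tail head S np X k q)
       = cnt1 E tail head S np X k i + cnt0 E tail head S np X k i"
proof -
  let ?P = "parents E tail head i" and ?T = "tree_links E tail head S k"
  have finP: "finite ?P" using multicast_cover_finite[OF net] by (simp add: parents_def)
  have restrict: "(\<Sum>q\<in>?P. cnt1 E tail head S np X k q) = (\<Sum>q\<in>?P \<inter> ?T. cnt1 E tail head S np X k q)"
    by (rule sum.mono_neutral_right) (use finP in \<open>auto simp: cnt1_def\<close>)
  show ?thesis
  proof (cases "i \<in> ?T")
    case False
    have "q \<notin> ?T" if "q \<in> ?P" for q
      using tree_links_child_closed[of q E tail head S k i] that iE False
      by (auto simp: parents_def children_def)
    then have "?P \<inter> ?T = {}" by blast
    then show ?thesis using False restrict by (simp add: cnt1_def cnt0_def)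
  next
    case True
    then obtain p where p: "p \<in> ?P \<inter> ?T" and unique: "\<And>q. q \<in> ?P \<inter> ?T \<Longrightarrow> q = p"
      using multicast_cover_unique_tree_parent[OF net k _ nonroot] by blast
    have "tree_parent E tail head S k i = p"
      unfolding tree_parent_def using p unique by blast
    moreover have "?P \<inter> ?T = {p}" using p unique by blast
    moreover have "i \<noteq> S k" using nonroot k by auto
    ultimately show ?thesis using True restrict by (simp add: cnt0_def)
  qed
qed

lemma sum_parents_N1:
  assumes net: "multicast_cover E tail head K S" and "i \<in> E" and "i \<notin> S ` {1..K}"
  shows "(\<Sum>q\<in>parents E tail head i. N1 E tail head K S np X q)
       = N1 E tail head K S np X i + N0 E tail head K S np X i"
proof -
  have "(\<Sum>q\<in>parents E tail head i. N1 E tail head K S np X q)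
      = (\<Sum>k\<in>{1..K}. \<Sum>q\<in>parents E tail head i. cnt1 E tail head S np X k q)"
    unfolding N1_def by (rule sum.swap)
  also have "\<dots> = (\<Sum>k\<in>{1..K}. cnt1 E tail head S np X k i + cnt0 E tail head S np X k i)"
    using sum_parents_cnt1[OF net _ assms(2,3)] by simp
  finally show ?thesis by (simp add: N1_def N0_def sum.distrib)
qed

lemma prodC_upd_nonchild:
  assumes "i \<notin> children E tail head q"
  shows "prodC E tail head (\<xi>(i := t)) q = prodC E tail head \<xi> q"
proof -
  have "(\<Prod>j\<in>children E tail head q. (\<xi>(i := t)) j) = (\<Prod>j\<in>children E tail head q. \<xi> j)"
    by (rule prod.cong) (use assms in auto)
  then show ?thesis by (simp add: prodC_def)
qed

lemma prodC_upd_child: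
  assumes "finite E" and "i \<in> children E tail head q"
  shows "prodC E tail head (\<xi>(i := t)) q = t * (\<Prod>j\<in>children E tail head q - {i}. \<xi> j)"
proof -
  have "finite (children E tail head q)" using assms(1) by (simp add: children_def)
  then show ?thesis
    using assms(2) unfolding prodC_def by (auto simp: prod.remove intro!: prod.cong)
qed

lemma prodC_less_1:
  assumes "\<xi> \<in> Xi E tail head" and "q \<in> E"
  shows "prodC E tail head \<xi> q < 1"
  using assms by (force simp: prodC_def Xi_def)

lemma prod_Xi_bounds:
  assumes "\<xi> \<in> Xi E tail head" and "A \<subseteq> E"
  shows "0 < (\<Prod>j\<in>A. \<xi> j)" and "(\<Prod>j\<in>A. \<xi> j) \<le> 1"
  using assms by (auto simp: Xi_def subset_iff less_imp_le intro!: prod_pos prod_le_1)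

lemma loglik_term_has_derivative:
  fixes \<xi> :: "'a \<Rightarrow> real"
  assumes fin: "finite E" and iE: "i \<in> E" and qE: "q \<in> E" and xi: "\<xi> \<in> Xi E tail head"
    and not_self: "i \<notin> children E tail head i"
  defines "c \<equiv> \<Prod>j\<in>brothers E tail i - {i}. \<xi> j"
  shows "((\<lambda>t. a * ln ((1 - (\<xi>(i := t)) q) / (1 - prodC E tail head (\<xi>(i := t)) q))
                + b * ln ((\<xi>(i := t)) q))
      has_real_derivative
        (if q = i then - a / (1 - \<xi> i) + b / \<xi> i else 0)
        + (if q \<in> parents E tail head i then a * c / (1 - \<xi> i * c) else 0)) (at (\<xi> i))"
proof -
  have x: "0 < \<xi> i" "\<xi> i < 1" using xi iE by (auto simp: Xi_def)
  have "brothers E tail i - {i} \<subseteq> E" by (auto simp: brothers_def)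
  then have c: "0 < c" "c \<le> 1" unfolding c_def by (rule prod_Xi_bounds[OF xi])+
  have "\<xi> i * c < 1" using x c mult_left_le[of c "\<xi> i"] by linarith
  consider "q = i" | "q \<in> parents E tail head i" | "q \<noteq> i" "i \<notin> children E tail head q"
    using child_iff_parent[OF iE qE] by blast
  then show ?thesis
  proof cases
    case 1
    let ?P = "prodC E tail head \<xi> i"
    have "?P < 1" by (rule prodC_less_1[OF xi iE])
    then have "((\<lambda>t. a * ln ((1 - t) / (1 - ?P)) + b * ln t)
        has_real_derivative - a / (1 - \<xi> i) + b / \<xi> i) (at (\<xi> i))"
      using x by (auto intro!: derivative_eq_intros) (simp add: divide_simps, simp add: algebra_simps)
    moreover have "i \<notin> parents E tail head i"
      using not_self child_iff_parent[OF iE iE] by blast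
    ultimately show ?thesis using 1 prodC_upd_nonchild[OF not_self] by simp
  next
    case 2
    have "q \<noteq> i" using 2 not_self child_iff_parent[OF iE iE] by blast
    have child: "i \<in> children E tail head q" using 2 child_iff_parent[OF iE qE] by blast
    have "prodC E tail head (\<xi>(i := t)) q = t * c" for t
      using prodC_upd_child[OF fin child] children_of_parent[OF 2] by (simp add: c_def)
    moreover have "((\<lambda>t. a * ln ((1 - \<xi> q) / (1 - t * c)) + b * ln (\<xi> q))
        has_real_derivative a * c / (1 - \<xi> i * c)) (at (\<xi> i))"
      using \<open>\<xi> i * c < 1\<close> xi qE by (auto intro!: derivative_eq_intros simp: Xi_def)
    ultimately show ?thesis using 2 \<open>q \<noteq> i\<close> by simp
  next
    case 3
    then have "q \<notin> parents E tail head i" using child_iff_parent[OF iE qE] by blast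
    then show ?thesis using 3 prodC_upd_nonchild[OF 3(2)] by simp
  qed
qed

definition loglik_partial ::
    "'a set \<Rightarrow> ('a \<Rightarrow> 'v) \<Rightarrow> ('a \<Rightarrow> 'v) \<Rightarrow> nat \<Rightarrow> (nat \<Rightarrow> 'a) \<Rightarrow> (nat \<Rightarrow> nat)
      \<Rightarrow> (nat \<Rightarrow> nat \<Rightarrow> 'a \<Rightarrow> bool) \<Rightarrow> ('a \<Rightarrow> real) \<Rightarrow> 'a \<Rightarrow> real" where
  "loglik_partial E tail head K S np X \<xi> i =
     - N1 E tail head K S np X i / (1 - \<xi> i) + N0 E tail head K S np X i / \<xi> i
     + (\<Sum>q\<in>parents E tail head i. N1 E tail head K S np X q) * (\<Prod>j\<in>brothers E tail i - {i}. \<xi> j)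
       / (1 - \<xi> i * (\<Prod>j\<in>brothers E tail i - {i}. \<xi> j))"

lemma loglik_has_derivative:
  assumes net: "multicast_cover E tail head K S" and iE: "i \<in> E" and xi: "\<xi> \<in> Xi E tail head"
  shows "((\<lambda>t. loglik E tail head K S np X (\<xi>(i := t)))
    has_real_derivative loglik_partial E tail head K S np X \<xi> i) (at (\<xi> i))"
proof -
  have fin: "finite E" by (rule multicast_cover_finite[OF net])
  have parents_sub: "parents E tail head i \<subseteq> E" by (auto simp: parents_def)
  define c where "c = (\<Prod>j\<in>brothers E tail i - {i}. \<xi> j)"
  let ?n1 = "N1 E tail head K S np X" and ?n0 = "N0 E tail head K S np X"
  have "((\<lambda>t. loglik E tail head K S np X (\<xi>(i := t))) has_real_derivative
      (\<Sum>q\<in>E. (if q = i then - ?n1 q / (1 - \<xi> i) + ?n0 q / \<xi> i else 0)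
        + (if q \<in> parents E tail head i then ?n1 q * c / (1 - \<xi> i * c) else 0))) (at (\<xi> i))"
    unfolding loglik_def c_def
    by (intro DERIV_sum loglik_term_has_derivative[OF fin iE _ xi]
        multicast_cover_not_self_child[OF net iE])
  also have "(\<Sum>q\<in>E. (if q = i then - ?n1 q / (1 - \<xi> i) + ?n0 q / \<xi> i else 0)
        + (if q \<in> parents E tail head i then ?n1 q * c / (1 - \<xi> i * c) else 0))
      = loglik_partial E tail head K S np X \<xi> i"
    using fin iE parents_sub
    by (simp add: sum.distrib sum.inter_restrict[symmetric] Int_absorb1 loglik_partial_def c_def
        sum_distrib_right sum_divide_distrib)
  finally show ?thesis .
qed

lemma grad_zero_iff_loglik_partial:
  assumes "multicast_cover E tail head K S" and "\<xi> \<in> Xi E tail head"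
  shows "grad_zero E (loglik E tail head K S np X) \<xi>
    \<longleftrightarrow> (\<forall>i\<in>E. loglik_partial E tail head K S np X \<xi> i = 0)"
  unfolding grad_zero_def using loglik_has_derivative[OF assms(1) _ assms(2)] DERIV_unique by metis

lemma score_eq_zero_iff:
  fixes x c N1 N0 :: real
  assumes "0 < x" and "x < 1" and "0 \<le> c" and "x * c < 1" and "N1 + N0 > 0"
  shows "- N1 / (1 - x) + N0 / x + (N1 + N0) * c / (1 - x * c) = 0 \<longleftrightarrow>
         x = 1 - N1 / (N1 + N0) + N1 / (N1 + N0) * (x * c)"
proof -
  have lhs: "- N1 / (1 - x) + N0 / x + (N1 + N0) * c / (1 - x * c)
      = (N0 + N1 * (x * c) - x * (N1 + N0)) / (x * (1 - x) * (1 - x * c))"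
    using assms by (simp add: field_simps)
  have rhs: "1 - N1 / (N1 + N0) + N1 / (N1 + N0) * (x * c) = (N0 + N1 * (x * c)) / (N1 + N0)"
    using assms by (simp add: divide_simps)
  have "x * (1 - x) * (1 - x * c) \<noteq> 0" using assms by simp
  then show ?thesis
    unfolding lhs rhs using assms by (auto simp: eq_divide_eq)
qed

text \<open>For a root link the parent sum vanishes, which is the case \<open>c = 0\<close> of the
  previous lemma; for a non-root link it equals \<open>n_i(1) + n_i(0)\<close> by conservation.\<close>

lemma loglik_partial_eq_zero_iff:
  assumes net: "multicast_cover E tail head K S" and xi: "\<xi> \<in> Xi E tail head"
    and pos: "N1 E tail head K S np X i + N0 E tail head K S np X i > 0" and iE: "i \<in> E"
  shows "loglik_partial E tail head K S np X \<xi> i = 0 \<longleftrightarrow>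
    \<xi> i = (1 - rr E tail head K S np X i)
          + rr E tail head K S np X i * (if i \<notin> S ` {1..K} then 1 else 0)
            * (\<Prod>j \<in> brothers E tail i. \<xi> j)"
proof -
  let ?n1 = "N1 E tail head K S np X i" and ?n0 = "N0 E tail head K S np X i"
  define c where "c = (\<Prod>j\<in>brothers E tail i - {i}. \<xi> j)"
  have x: "0 < \<xi> i" "\<xi> i < 1" using xi iE by (auto simp: Xi_def)
  have "brothers E tail i - {i} \<subseteq> E" by (auto simp: brothers_def)
  then have c: "0 < c" "c \<le> 1" unfolding c_def by (rule prod_Xi_bounds[OF xi])+
  have "\<xi> i * c < 1" using x c mult_left_le[of c "\<xi> i"] by linarith
  have brothers: "(\<Prod>j \<in> brothers E tail i. \<xi> j) = \<xi> i * c"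
    unfolding c_def using multicast_cover_finite[OF net] iE
    by (intro prod.remove) (auto simp: brothers_def)
  have rr: "rr E tail head K S np X i = ?n1 / (?n1 + ?n0)" by (simp add: rr_def)
  show ?thesis
  proof (cases "i \<in> S ` {1..K}")
    case True
    then have "parents E tail head i = {}" using multicast_cover_root(2)[OF net] by auto
    then show ?thesis
      using True score_eq_zero_iff[of "\<xi> i" 0 ?n1 ?n0] x pos
      by (simp add: loglik_partial_def rr)
  next
    case False
    then show ?thesis
      using score_eq_zero_iff[OF x _ \<open>\<xi> i * c < 1\<close> pos] c
      by (simp add: loglik_partial_def sum_parents_N1[OF net iE False] rr brothers c_def)
  qed
qed

lemma stationary_brother_product:
  assumes net: "multicast_cover E tail head K S" and "i \<in> E" and "i \<notin> S ` {1..K}"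
    and stat: "\<forall>j \<in> E. \<xi> j = (1 - r j) + r j * (if j \<notin> S ` {1..K} then 1 else 0)
                                              * (\<Prod>l \<in> brothers E tail j. \<xi> l)"
  shows "(\<Prod>j \<in> brothers E tail i. \<xi> j)
       = (\<Prod>j \<in> brothers E tail i. (1 - r j) + r j * (\<Prod>l \<in> brothers E tail i. \<xi> l))"
proof (rule prod.cong[OF refl])
  fix j assume "j \<in> brothers E tail i"
  with stat brother_of_nonroot[OF net assms(2,3)]
  show "\<xi> j = (1 - r j) + r j * (\<Prod>l \<in> brothers E tail i. \<xi> l)"
    by simp
qed

theorem mainTheorem6:
  fixes E :: "'a set" and tail head :: "'a \<Rightarrow> 'v" and K :: nat and S :: "nat \<Rightarrow> 'a"
    and np :: "nat \<Rightarrow> nat" and X :: "nat \<Rightarrow> nat \<Rightarrow> 'a \<Rightarrow> bool" and \<xi> :: "'a \<Rightarrow> real"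
  assumes net: "multicast_cover E tail head K S"
    and pos: "\<forall>i \<in> E. N1 E tail head K S np X i + N0 E tail head K S np X i > 0"
    and xi: "\<xi> \<in> Xi E tail head"
  shows "(grad_zero E (loglik E tail head K S np X) \<xi> \<longleftrightarrow>
            (\<forall>i \<in> E. \<xi> i = (1 - rr E tail head K S np X i)
                 + rr E tail head K S np X i * (if i \<notin> S ` {1..K} then 1 else 0)
                   * (\<Prod>j \<in> brothers E tail i. \<xi> j)))
       \<and> (grad_zero E (loglik E tail head K S np X) \<xi> \<longrightarrow>
            (\<forall>k \<in> {1..K}. \<xi> (S k) = 1 - rr E tail head K S np X (S k))
          \<and> (\<forall>i \<in> E - S ` {1..K}.
               (\<Prod>j \<in> brothers E tail i. \<xi> j) =
               (\<Prod>j \<in> brothers E tail i. (1 - rr E tail head K S np X j)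
                   + rr E tail head K S np X j * (\<Prod>l \<in> brothers E tail i. \<xi> l))))"
proof -
  have stationary: "grad_zero E (loglik E tail head K S np X) \<xi> \<longleftrightarrow>
      (\<forall>i \<in> E. \<xi> i = (1 - rr E tail head K S np X i)
                 + rr E tail head K S np X i * (if i \<notin> S ` {1..K} then 1 else 0)
                   * (\<Prod>j \<in> brothers E tail i. \<xi> j))"
    using grad_zero_iff_loglik_partial[OF net xi] loglik_partial_eq_zero_iff[OF net xi] pos
    by simp
  moreover have "\<xi> (S k) = 1 - rr E tail head K S np X (S k)"
    if "grad_zero E (loglik E tail head K S np X) \<xi>" and "k \<in> {1..K}" for k
    using that stationary multicast_cover_root(1)[OF net] by fastforce
  ultimately show ?thesis
    using stationary_brother_product[OF net, where r = "rr E tail head K S np X"] by blast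
qed

end
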